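(* Let $K$ be a good triangulation of $P^n$ and $\sigma\in K$ a simplex with $\sigma\cap\mathbf H^n\neq\emptyset$. If $\sigma\cap\mathbf H_h=\emptyset$, then there is a unique $H_{i,\alpha}$ ($1\le i\le n$, $\alpha\in\{0,\infty\}$) such that $\sigma\cap\mathbf H^n\subset H_{i,\alpha}$, and moreover $\sigma\cap H'=\emptyset$ for every cubical face $H'$ other than $H_{i,\alpha}$.
   Context: $P^n=(\mathbb P^1_{\mathbb C})^n$ with coordinates $z_i$; $H_{i,\alpha}=\{z_i=\alpha\}$, $\alpha\in\{0,\infty\}$; a cubical face is a nonempty intersection of one or more of the $H_{i,\alpha}$; $\mathbf H^n=\bigcup H_{i,\alpha}$; $\mathbf H_h=\bigcup_{i<i',\alpha,\beta}(H_{i,\alpha}\cap H_{i',\beta})$; $\mathbf D^n=\bigcup_i\{z_i=1\}$. A good triangulation is a finite simplicial complex $K$ with a semi-algebraic homeomorphism $|K|\cong P^n$ (identifying them) such that $\mathbf D^n$ is a subcomplex, the image of each open simplex is a regular submanifold, every finite union of cubical faces is a full subcomplex (any simplex of $K$ whose vertices all lie in it belongs to it), and each $\{|z_i|\le1\}$ is a subcomplex. *)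

theory Defs
  imports "HOL-Analysis.Analysis"
begin

inductive poly_fun :: "('a::euclidean_space \<Rightarrow> real) \<Rightarrow> bool" where
  pf_const: "poly_fun (\<lambda>x. c)"
| pf_coord: "b \<in> Basis \<Longrightarrow> poly_fun (\<lambda>x. x \<bullet> b)"
| pf_add: "poly_fun p \<Longrightarrow> poly_fun q \<Longrightarrow> poly_fun (\<lambda>x. p x + q x)"
| pf_mult: "poly_fun p \<Longrightarrow> poly_fun q \<Longrightarrow> poly_fun (\<lambda>x. p x * q x)"

inductive semialg :: "'a::euclidean_space set \<Rightarrow> bool" where
  sa_eq: "poly_fun p \<Longrightarrow> semialg {x. p x = 0}"
| sa_pos: "poly_fun p \<Longrightarrow> semialg {x. 0 < p x}"
| sa_un: "semialg S \<Longrightarrow> semialg T \<Longrightarrow> semialg (S \<union> T)"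
| sa_compl: "semialg S \<Longrightarrow> semialg (- S)"

definition Cinf_on :: "'a::euclidean_space set \<Rightarrow> ('a \<Rightarrow> 'b::euclidean_space) \<Rightarrow> bool" where
  "Cinf_on U f \<longleftrightarrow> (\<exists>F. f \<in> F \<and> (\<forall>g\<in>F. continuous_on U g \<and>
      (\<forall>b\<in>Basis. \<exists>g'\<in>F. \<forall>x\<in>U. ((\<lambda>t. g (x + t *\<^sub>R b)) has_vector_derivative g' x) (at 0))))"

definition regular_submanifold :: "'a::euclidean_space set \<Rightarrow> bool" where
  "regular_submanifold M \<longleftrightarrow> (\<forall>x\<in>M. \<exists>U V (\<phi>::'a \<Rightarrow> 'a) \<psi> L.
      open U \<and> x \<in> U \<and> open V \<and> subspace L \<and> Cinf_on U \<phi> \<and> Cinf_on V \<psi> \<and>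
      \<phi> ` U = V \<and> \<psi> ` V = U \<and> (\<forall>y\<in>U. \<psi> (\<phi> y) = y) \<and> (\<forall>v\<in>V. \<phi> (\<psi> v) = v) \<and>
      \<phi> ` (U \<inter> M) = V \<inter> L)"

section \<open>The Riemann sphere P^1 as the unit sphere in R^3, and P^n\<close>

definition north :: "real^3" where "north = vector [0, 0, 1]"

definition stereo :: "complex \<Rightarrow> real^3" where
  "stereo z = (1 / ((cmod z)\<^sup>2 + 1)) *\<^sub>R vector [2 * Re z, 2 * Im z, (cmod z)\<^sup>2 - 1]"

definition P1 :: "(real^3) set" where "P1 = insert north (range stereo)"

definition Pn :: "(real^3^'n) set" where "Pn = {z. \<forall>i. z $ i \<in> P1}"

datatype zinf = Z0 | ZInf

definition zpt :: "zinf \<Rightarrow> real^3" where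
  "zpt a = (case a of Z0 \<Rightarrow> stereo 0 | ZInf \<Rightarrow> north)"

definition Hface :: "'n \<Rightarrow> zinf \<Rightarrow> (real^3^'n) set" where
  "Hface i a = {z \<in> Pn. z $ i = zpt a}"

definition Hn :: "(real^3^'n) set" where "Hn = (\<Union>i a. Hface i a)"

definition Hh :: "(real^3^'n) set" where
  "Hh = \<Union>{Hface i a \<inter> Hface j b | i j a b. i \<noteq> j}"

definition Dn :: "(real^3^'n) set" where "Dn = (\<Union>i. {z \<in> Pn. z $ i = stereo 1})"

definition disc_i :: "'n \<Rightarrow> (real^3^'n) set" where
  "disc_i i = {z \<in> Pn. z $ i \<in> stereo ` cball 0 1}"

definition cubical_face :: "(real^3^'n) set \<Rightarrow> bool" where
  "cubical_face F \<longleftrightarrow> F \<noteq> {} \<and>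
     (\<exists>S. S \<noteq> {} \<and> F = \<Inter> ((\<lambda>(i, a). Hface i a) ` S))"

definition simplicial_complex :: "'a::euclidean_space set set \<Rightarrow> bool" where
  "simplicial_complex K \<longleftrightarrow> finite K \<and>
     (\<forall>s\<in>K. s \<noteq> {} \<and> finite s \<and> \<not> affine_dependent s) \<and>
     (\<forall>s\<in>K. \<forall>t. t \<subseteq> s \<and> t \<noteq> {} \<longrightarrow> t \<in> K) \<and>
     (\<forall>s\<in>K. \<forall>t\<in>K. convex hull s \<inter> convex hull t = convex hull (s \<inter> t))"

definition polyhedron_of :: "'a::euclidean_space set set \<Rightarrow> 'a set" where
  "polyhedron_of K = (\<Union>s\<in>K. convex hull s)"

definition is_subcomplex :: "'a::euclidean_space set set \<Rightarrow> ('a \<Rightarrow> 'b) \<Rightarrow> 'b set \<Rightarrow> bool" where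
  "is_subcomplex K h A \<longleftrightarrow> (\<exists>L\<subseteq>K. A = h ` (\<Union>s\<in>L. convex hull s))"

definition is_full_subcomplex :: "'a::euclidean_space set set \<Rightarrow> ('a \<Rightarrow> 'b) \<Rightarrow> 'b set \<Rightarrow> bool" where
  "is_full_subcomplex K h A \<longleftrightarrow> is_subcomplex K h A \<and>
     (\<forall>s\<in>K. h ` s \<subseteq> A \<longrightarrow> h ` (convex hull s) \<subseteq> A)"

definition good_triangulation ::
    "'a::euclidean_space set set \<Rightarrow> ('a \<Rightarrow> real^3^'n) \<Rightarrow> bool" where
  "good_triangulation K h \<longleftrightarrow> simplicial_complex K \<and>
     (\<exists>g. homeomorphism (polyhedron_of K) Pn h g) \<and>
     semialg {(x, h x) | x. x \<in> polyhedron_of K} \<and>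
     is_subcomplex K h Dn \<and>
     (\<forall>s\<in>K. regular_submanifold (h ` rel_interior (convex hull s))) \<and>
     (\<forall>F. finite F \<and> (\<forall>C\<in>F. cubical_face C) \<longrightarrow> is_full_subcomplex K h (\<Union>F)) \<and>
     (\<forall>i. is_subcomplex K h (disc_i i))"

end

theory Submission
  imports Defs
begin

text \<open>A simplex meeting \<open>Hn\<close> but not \<open>Hh\<close> meets \<open>Hn\<close> only in
  faces of itself spanned by vertices lying in \<open>Hn\<close>, since \<open>Hn\<close> is a full subcomplex. Two
  such vertices lie in the same \<open>Hface i a\<close>: otherwise the edge joining them, which by
  fullness lies in the union of the two faces, would be a connected set covered by two disjoint
  relatively closed pieces (disjoint because the simplex avoids \<open>Hh\<close>). Fullness of
  \<open>Hface i a\<close> then puts the whole of the simplex's trace on \<open>Hn\<close> into \<open>Hface i a\<close>, and a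
  point of \<open>Hface i a\<close> outside \<open>Hh\<close> lies in no other cubical face.\<close>

lemma zpt_eq_iff [simp]: "zpt a = zpt b \<longleftrightarrow> a = b"
proof -
  have "stereo 0 $ 3 \<noteq> north $ 3"
    by (simp add: stereo_def north_def)
  then show ?thesis
    by (cases a; cases b) (auto simp: zpt_def)
qed

lemma zpt_in_P1: "zpt a \<in> P1"
  by (cases a) (auto simp: zpt_def P1_def)

lemma finite_zinf_UNIV: "finite (UNIV :: zinf set)"
proof -
  have "(UNIV :: zinf set) = {Z0, ZInf}"
    using zinf.exhaust by blast
  then show ?thesis
    by (metis finite.emptyI finite_insert)
qed

lemma Hface_eq_if_not_in_Hh:
  assumes "z \<in> Hface i a" "z \<in> Hface j b" "z \<notin> Hh"
  shows "j = i \<and> b = a"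
proof -
  have "i = j"
    using assms unfolding Hh_def by blast
  with assms(1,2) show ?thesis
    by (simp add: Hface_def)
qed

lemma cubical_face_Hface: "cubical_face (Hface i a)"
proof -
  have "(\<chi> k. zpt a) \<in> Hface i a"
    by (simp add: Hface_def Pn_def zpt_in_P1)
  moreover have "Hface i a = \<Inter> ((\<lambda>(i, a). Hface i a) ` {(i, a)})"
    by simp
  ultimately show ?thesis
    unfolding cubical_face_def by blast
qed

lemma Hn_eq_Union_Hface: "Hn = \<Union> (range (\<lambda>(i, a). Hface i a))"
  unfolding Hn_def by auto

lemma finite_range_Hface: "finite (range (\<lambda>(i :: 'n :: finite, a). Hface i a))"
  by (simp add: finite_zinf_UNIV finite_Prod_UNIV)

lemma closed_coordinate_slice: "closed {z :: real^3^'n. z $ i = c}"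
  by (rule closed_Collect_eq) (auto intro: continuous_intros)

lemma cubical_face_subset_Hn: "cubical_face F \<Longrightarrow> F \<subseteq> Hn"
  unfolding cubical_face_def Hn_def by fast

lemma cubical_face_eq_Hface_if_not_in_Hh:
  assumes "cubical_face F" "z \<in> F" "z \<in> Hface i a" "z \<notin> Hh"
  shows "F = Hface i a"
proof -
  obtain S where S: "S \<noteq> {}" "F = \<Inter> ((\<lambda>(i, a). Hface i a) ` S)"
    using assms(1) unfolding cubical_face_def by blast
  have "q = (i, a)" if "q \<in> S" for q
    using Hface_eq_if_not_in_Hh[OF assms(3) _ assms(4), of "fst q" "snd q"] that assms(2) S(2)
    by (cases q) auto
  with S have "S = {(i, a)}" by auto
  with S(2) show ?thesis by simp
qed

text \<open>The faces \<open>Hface i a\<close> are relatively closed in \<open>Pn\<close> and, away from \<open>Hh\<close>, pairwise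
  disjoint.\<close>

lemma connected_subset_Hface_Un:
  assumes "connected C" "C \<subseteq> Hface i a \<union> Hface j b" "C \<inter> Hh = {}"
    and "C \<inter> Hface i a \<noteq> {}" "C \<inter> Hface j b \<noteq> {}"
  shows "j = i \<and> b = a"
proof (rule ccontr)
  assume ne: "\<not> (j = i \<and> b = a)"
  define A where "A = {z. z $ i = zpt a}"
  define B where "B = {z. z $ j = zpt b}"
  have "C \<subseteq> A \<union> B" "C \<inter> A \<noteq> {}" "C \<inter> B \<noteq> {}"
    using assms(2,4,5) unfolding A_def B_def Hface_def by blast+
  moreover have "A \<inter> B \<inter> C = {}"
  proof -
    have "z \<notin> A \<inter> B" if "z \<in> C" for z
    proof
      assume "z \<in> A \<inter> B"
      moreover have "z \<in> Pn" "z \<notin> Hh"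
        using that assms(2,3) unfolding Hface_def by blast+
      ultimately show False
        using Hface_eq_if_not_in_Hh[of z i a j b] ne unfolding A_def B_def Hface_def by blast
    qed
    then show ?thesis by blast
  qed
  moreover have "closed A" "closed B"
    unfolding A_def B_def by (rule closed_coordinate_slice)+
  ultimately show False
    using assms(1) unfolding connected_closed by blast
qed

text \<open>The face \<open>u\<close> is the intersection of \<open>s\<close> with a simplex of \<open>L\<close> containing \<open>x\<close>.\<close>

lemma simplex_inter_subcomplex:
  assumes "simplicial_complex K" "s \<in> K" "L \<subseteq> K"
    and "x \<in> convex hull s" "x \<in> (\<Union>t\<in>L. convex hull t)"
  obtains u where "u \<in> K" "u \<subseteq> s" "u \<subseteq> (\<Union>t\<in>L. convex hull t)" "x \<in> convex hull u"
proof -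
  obtain t where t: "t \<in> L" "x \<in> convex hull t"
    using assms(5) by blast
  have "convex hull s \<inter> convex hull t = convex hull (s \<inter> t)"
    using assms(1,2,3) t(1) unfolding simplicial_complex_def by blast
  with assms(4) t(2) have x: "x \<in> convex hull (s \<inter> t)"
    by blast
  then have "s \<inter> t \<noteq> {}"
    by auto
  then have "s \<inter> t \<in> K"
    using assms(1,2) unfolding simplicial_complex_def by blast
  moreover have "s \<inter> t \<subseteq> (\<Union>t\<in>L. convex hull t)"
    using t(1) hull_subset[of t convex] by blast
  ultimately show ?thesis
    using that x by blast
qed

context
  fixes K :: "'a::euclidean_space set set" and h :: "'a \<Rightarrow> real^3^'n"
  assumes good: "good_triangulation K h"
begin

lemma good_triangulation_simplicial_complex: "simplicial_complex K"
  using good by (simp add: good_triangulation_def)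

lemma good_triangulation_face: "s \<in> K \<Longrightarrow> t \<subseteq> s \<Longrightarrow> t \<noteq> {} \<Longrightarrow> t \<in> K"
  using good_triangulation_simplicial_complex unfolding simplicial_complex_def by metis

lemma good_triangulation_homeomorphism:
  obtains g where "homeomorphism (polyhedron_of K) Pn h g"
  using good by (auto simp: good_triangulation_def)

lemma good_triangulation_full_subcomplex:
  "finite F \<Longrightarrow> \<forall>C\<in>F. cubical_face C \<Longrightarrow> is_full_subcomplex K h (\<Union>F)"
  using good by (simp add: good_triangulation_def)

lemma good_triangulation_full_Union:
  assumes "finite F" "\<forall>C\<in>F. cubical_face C" "s \<in> K" "h ` s \<subseteq> \<Union>F"
  shows "h ` (convex hull s) \<subseteq> \<Union>F"
  using good_triangulation_full_subcomplex[OF assms(1,2)] assms(3,4)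
  unfolding is_full_subcomplex_def by blast

lemma good_triangulation_simplex_Hn:
  assumes "s \<in> K" "x \<in> convex hull s" "h x \<in> Hn"
  obtains u where "u \<in> K" "u \<subseteq> s" "h ` u \<subseteq> Hn" "x \<in> convex hull u"
proof -
  have "is_full_subcomplex K h Hn"
    unfolding Hn_eq_Union_Hface
    by (rule good_triangulation_full_subcomplex) (auto simp: finite_range_Hface cubical_face_Hface)
  then obtain L where L: "L \<subseteq> K" "Hn = h ` (\<Union>t\<in>L. convex hull t)"
    unfolding is_full_subcomplex_def is_subcomplex_def by blast
  obtain g where "homeomorphism (polyhedron_of K) Pn h g"
    using good_triangulation_homeomorphism .
  then have inj: "inj_on h (polyhedron_of K)"
    unfolding homeomorphism_def by (metis inj_on_inverseI)
  obtain y where y: "y \<in> (\<Union>t\<in>L. convex hull t)" "h x = h y"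
    using assms(3) L(2) by blast
  moreover have "x \<in> polyhedron_of K" "y \<in> polyhedron_of K"
    using assms(1,2) L(1) y(1) unfolding polyhedron_of_def by blast+
  ultimately have "x \<in> (\<Union>t\<in>L. convex hull t)"
    using inj_onD[OF inj] by metis
  then obtain u where u: "u \<in> K" "u \<subseteq> s" "u \<subseteq> (\<Union>t\<in>L. convex hull t)" "x \<in> convex hull u"
    by (rule simplex_inter_subcomplex[OF good_triangulation_simplicial_complex assms(1) L(1) assms(2)])
  have "h ` u \<subseteq> Hn"
    using u(3) unfolding L(2) by (rule image_mono)
  then show ?thesis
    by (rule that[OF u(1,2) _ u(4)])
qed

text \<open>Two vertices in \<open>Hn\<close> of a simplex avoiding \<open>Hh\<close> lie in the same face: by fullness the
  edge joining them is contained in the union of their faces.\<close>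

lemma good_triangulation_vertices_same_Hface:
  assumes "s \<in> K" "h ` (convex hull s) \<inter> Hh = {}"
    and "v \<in> s" "u \<in> s" "h v \<in> Hface i a" "h u \<in> Hface j b"
  shows "j = i \<and> b = a"
proof (rule connected_subset_Hface_Un)
  let ?e = "convex hull {v, u}"
  have e: "{v, u} \<in> K"
    by (rule good_triangulation_face[OF assms(1)]) (use assms(3,4) in auto)
  have e_sub: "?e \<subseteq> convex hull s"
    by (rule hull_minimal) (use assms(3,4) hull_subset[of s convex] in auto)
  obtain g where "homeomorphism (polyhedron_of K) Pn h g"
    using good_triangulation_homeomorphism .
  then have "continuous_on ?e h"
    using e_sub assms(1) unfolding homeomorphism_def polyhedron_of_def
    by (meson UN_upper continuous_on_subset subset_trans)
  then show "connected (h ` ?e)"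
    by (simp add: connected_continuous_image convex_connected)
  show "h ` ?e \<subseteq> Hface i a \<union> Hface j b"
    using good_triangulation_full_Union[of "{Hface i a, Hface j b}" "{v, u}"] e assms(5,6)
    by (simp add: cubical_face_Hface)
  show "h ` ?e \<inter> Hh = {}"
    using assms(2) e_sub by blast
  have "v \<in> ?e" "u \<in> ?e"
    by (simp_all add: hull_inc)
  then show "h ` ?e \<inter> Hface i a \<noteq> {}" "h ` ?e \<inter> Hface j b \<noteq> {}"
    using assms(5,6) by blast+
qed

lemma good_triangulation_simplex_Hn_subset_Hface:
  assumes "s \<in> K" "h ` (convex hull s) \<inter> Hh = {}" "v \<in> s" "h v \<in> Hface i a"
  shows "h ` (convex hull s) \<inter> Hn \<subseteq> Hface i a"
proof
  fix z assume "z \<in> h ` (convex hull s) \<inter> Hn"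
  then obtain x where x: "x \<in> convex hull s" "z = h x" "h x \<in> Hn"
    by blast
  obtain u where u: "u \<in> K" "u \<subseteq> s" "h ` u \<subseteq> Hn" "x \<in> convex hull u"
    by (rule good_triangulation_simplex_Hn[OF assms(1) x(1,3)])
  have "h ` u \<subseteq> Hface i a"
  proof
    fix y assume "y \<in> h ` u"
    then obtain w j b where "w \<in> u" "y = h w" "h w \<in> Hface j b"
      using u(3) unfolding Hn_def by blast
    with good_triangulation_vertices_same_Hface[OF assms(1,2,3) _ assms(4)] u(2)
    show "y \<in> Hface i a" by blast
  qed
  then have "h ` (convex hull u) \<subseteq> Hface i a"
    using good_triangulation_full_Union[of "{Hface i a}" u] u(1) by (simp add: cubical_face_Hface)
  with x u(4) show "z \<in> Hface i a"
    by blast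
qed

end

theorem lemma4p8:
  fixes K :: "'a::euclidean_space set set" and h :: "'a \<Rightarrow> real^3^'n" and s :: "'a set"
  assumes "good_triangulation K h"
    and "s \<in> K"
    and "h ` (convex hull s) \<inter> Hn \<noteq> {}"
    and "h ` (convex hull s) \<inter> Hh = {}"
  shows "\<exists>i a. h ` (convex hull s) \<inter> Hn \<subseteq> Hface i a
     \<and> (\<forall>j b. h ` (convex hull s) \<inter> Hn \<subseteq> Hface j b \<longrightarrow> j = i \<and> b = a)
     \<and> (\<forall>F. cubical_face F \<and> F \<noteq> Hface i a \<longrightarrow> h ` (convex hull s) \<inter> F = {})"
proof -
  let ?\<sigma> = "h ` (convex hull s)"
  obtain x where x: "x \<in> convex hull s" "h x \<in> Hn"
    using assms(3) by blast
  then obtain u where u: "u \<in> K" "u \<subseteq> s" "h ` u \<subseteq> Hn" "x \<in> convex hull u"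
    by (rule good_triangulation_simplex_Hn[OF assms(1,2)])
  from u(4) obtain v where "v \<in> u"
    by fastforce
  then obtain i a where v: "v \<in> s" "h v \<in> Hface i a"
    using u(2,3) unfolding Hn_def by blast
  have face: "?\<sigma> \<inter> Hn \<subseteq> Hface i a"
    using good_triangulation_simplex_Hn_subset_Hface[OF assms(1,2,4) v] .
  have x_face: "h x \<in> Hface i a" "h x \<notin> Hh"
    using face x assms(4) by blast+
  have "\<forall>j b. ?\<sigma> \<inter> Hn \<subseteq> Hface j b \<longrightarrow> j = i \<and> b = a"
    using Hface_eq_if_not_in_Hh[OF x_face(1) _ x_face(2)] x by blast
  moreover have "\<forall>F. cubical_face F \<and> F \<noteq> Hface i a \<longrightarrow> ?\<sigma> \<inter> F = {}"
  proof (intro allI impI)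
    fix F assume F: "cubical_face F \<and> F \<noteq> Hface i a"
    have "z \<notin> F" if "z \<in> ?\<sigma>" for z
    proof
      assume "z \<in> F"
      then have "z \<in> Hn"
        using F cubical_face_subset_Hn by blast
      with that show False
        using face assms(4) cubical_face_eq_Hface_if_not_in_Hh[of F z i a] F \<open>z \<in> F\<close> by blast
    qed
    then show "?\<sigma> \<inter> F = {}" by blast
  qed
  ultimately show ?thesis
    using face by blast
qed

end
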